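(* Let $F:\mathcal{G}_{\Sigma,\Delta,\pi}\to\mathcal{G}_{\Sigma,\Delta,\pi}$ be a causal graph dynamics that is monotonic for the subgraph order and admits a monotonic local rule. Let $\widetilde{F}:\mathbf{G}_{\Sigma,\Delta,\pi}\to\mathbf{G}_{\Sigma,\Delta,\pi}$ be a functor with $\mathrm{U}\circ F=\widetilde{F}\circ\mathrm{U}$. Then for every morphism $m:G\to H$ of $\mathbf{G}_{\Sigma,\Delta,\pi}$, the renamings $|\widetilde{F}(m)|$ and $|\widetilde{F}(\varnothing_{|m|})|$ are equal.
   Context: Fix an uncountably infinite set $\mathcal{V}$, sets $\Sigma,\Delta$, finite $\pi$. Graphs: countable $V(G)\subset\mathcal{V}$, a set $E(G)$ of pairwise disjoint two-element subsets of $V(G)\times\pi$, partial labelings $\sigma(G),\delta(G)$; $\mathcal{G}_{\Sigma,\Delta,\pi}$ the set of graphs, ordered by componentwise inclusion $\subseteq$. Renamings are bijections $R$ of $\mathcal{V}$ acting naturally on graphs ($V(R(G))=R(V(G))$, edges $\{u\!:\!i,v\!:\!j\}\mapsto\{R(u)\!:\!i,R(v)\!:\!j\}$, $\sigma(R(G))=\sigma(G)\circ R^{-1}$, $\delta(R(G))=\delta(G)\circ R^{-1}$). Disks $G^r_c$ (radius $r$, center $c$): vertices at distance $\le r+1$, edges with an endpoint at distance $\le r$, vertex labels only at distance $\le r$, edge labels of the kept edges. A local rule of radius $r$ is $f$ from radius-$r$ disks to graphs with: renaming covariance ($f\circ R=R'\circ f$ for some $R'$), disjointness preservation, bounded output size,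 and consistency of $f(G^r_u),f(G^r_v)$; a CGD is $F(G)=\bigcup_{v\in V(G)} f(G^r_v)$; monotonic means w.r.t. $\subseteq$ (subdisk order on disks: same center and inclusion). The category $\mathbf{G}_{\Sigma,\Delta,\pi}$: objects graphs; a morphism $m:G\to H$ is a renaming $|m|$ with $|m|(G)\subseteq H$; composition by composition of renamings. $\mathrm{U}:(\mathcal{G}_{\Sigma,\Delta,\pi},\subseteq)\to\mathbf{G}_{\Sigma,\Delta,\pi}$ is the identity on objects and sends $G\subseteq H$ to the morphism $G\to H$ with identity renaming; $\mathrm{U}\circ F$ is the functor sending $G\subseteq H$ to $\mathrm{U}(F(G)\subseteq F(H))$. For a renaming $R$, $\varnothing_R:\varnothing\to\varnothing$ is the endomorphism of the empty graph with $|\varnothing_R|=R$. *)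

theory Defs
  imports Main "HOL-Library.Countable_Set"
begin

text \<open>Vertices are elements of the type 'v (playing the role of the uncountable set V);
 ports are elements of a finite set Pi :: 'p set, vertex labels lie in Sig :: 's set,
 edge labels lie in Del :: 'd set.\<close>

record ('v, 'p, 's, 'd) graph =
  verts :: "'v set"
  edges :: "('v \<times> 'p) set set"
  vlab  :: "'v \<rightharpoonup> 's"
  elab  :: "('v \<times> 'p) set \<rightharpoonup> 'd"

definition is_graph :: "'s set \<Rightarrow> 'd set \<Rightarrow> 'p set \<Rightarrow> ('v, 'p, 's, 'd) graph \<Rightarrow> bool" where
  "is_graph Sig Del Pi G \<longleftrightarrow>
     countable (verts G) \<and>
     (\<forall>e\<in>edges G. \<exists>a b. a \<noteq> b \<and> e = {a, b} \<and> a \<in> verts G \<times> Pi \<and> b \<in> verts G \<times> Pi) \<and>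
     (\<forall>e\<in>edges G. \<forall>e'\<in>edges G. e \<noteq> e' \<longrightarrow> e \<inter> e' = {}) \<and>
     dom (vlab G) \<subseteq> verts G \<and> ran (vlab G) \<subseteq> Sig \<and>
     dom (elab G) \<subseteq> edges G \<and> ran (elab G) \<subseteq> Del"

definition subgraph :: "('v, 'p, 's, 'd) graph \<Rightarrow> ('v, 'p, 's, 'd) graph \<Rightarrow> bool" where
  "subgraph G H \<longleftrightarrow> verts G \<subseteq> verts H \<and> edges G \<subseteq> edges H \<and>
     vlab G \<subseteq>\<^sub>m vlab H \<and> elab G \<subseteq>\<^sub>m elab H"

definition empty_graph :: "('v, 'p, 's, 'd) graph" where
  "empty_graph = \<lparr>verts = {}, edges = {}, vlab = Map.empty, elab = Map.empty\<rparr>"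

definition rename_edge :: "('v \<Rightarrow> 'v) \<Rightarrow> ('v \<times> 'p) set \<Rightarrow> ('v \<times> 'p) set" where
  "rename_edge R e = (\<lambda>(u, i). (R u, i)) ` e"

definition rename :: "('v \<Rightarrow> 'v) \<Rightarrow> ('v, 'p, 's, 'd) graph \<Rightarrow> ('v, 'p, 's, 'd) graph" where
  "rename R G = \<lparr>verts = R ` verts G,
                 edges = rename_edge R ` edges G,
                 vlab = vlab G \<circ> inv R,
                 elab = elab G \<circ> rename_edge (inv R)\<rparr>"

definition gunion :: "('v, 'p, 's, 'd) graph set \<Rightarrow> ('v, 'p, 's, 'd) graph" where
  "gunion S = \<lparr>verts = \<Union> (verts ` S),
               edges = \<Union> (edges ` S),
               vlab = (\<lambda>x. if \<exists>G\<in>S. vlab G x \<noteq> None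
                           then vlab (SOME G. G \<in> S \<and> vlab G x \<noteq> None) x else None),
               elab = (\<lambda>x. if \<exists>G\<in>S. elab G x \<noteq> None
                           then elab (SOME G. G \<in> S \<and> elab G x \<noteq> None) x else None)\<rparr>"

definition consistent :: "'s set \<Rightarrow> 'd set \<Rightarrow> 'p set \<Rightarrow>
    ('v, 'p, 's, 'd) graph \<Rightarrow> ('v, 'p, 's, 'd) graph \<Rightarrow> bool" where
  "consistent Sig Del Pi G H \<longleftrightarrow>
     (\<forall>x \<in> dom (vlab G) \<inter> dom (vlab H). vlab G x = vlab H x) \<and>
     (\<forall>x \<in> dom (elab G) \<inter> dom (elab H). elab G x = elab H x) \<and>
     is_graph Sig Del Pi (gunion {G, H})"

definition adj :: "('v, 'p, 's, 'd) graph \<Rightarrow> 'v \<Rightarrow> 'v \<Rightarrow> bool" where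
  "adj G u v \<longleftrightarrow> (\<exists>i j. {(u, i), (v, j)} \<in> edges G)"

definition within :: "('v, 'p, 's, 'd) graph \<Rightarrow> nat \<Rightarrow> 'v \<Rightarrow> 'v \<Rightarrow> bool" where
  "within G n c v \<longleftrightarrow> c \<in> verts G \<and> v \<in> verts G \<and>
     (\<exists>k\<le>n. (c, v) \<in> {(x, y). adj G x y} ^^ k)"

definition disk :: "nat \<Rightarrow> ('v, 'p, 's, 'd) graph \<Rightarrow> 'v \<Rightarrow> ('v, 'p, 's, 'd) graph" where
  "disk r G c =
     (let Ed = {e \<in> edges G. \<exists>(u, i) \<in> e. within G r c u} in
      \<lparr>verts = {v. within G (Suc r) c v},
       edges = Ed,
       vlab = vlab G |` {v. within G r c v},
       elab = elab G |` Ed\<rparr>)"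

definition is_disk :: "'s set \<Rightarrow> 'd set \<Rightarrow> 'p set \<Rightarrow> nat \<Rightarrow>
    ('v, 'p, 's, 'd) graph \<times> 'v \<Rightarrow> bool" where
  "is_disk Sig Del Pi r D \<longleftrightarrow>
     (\<exists>G c. is_graph Sig Del Pi G \<and> c \<in> verts G \<and> D = (disk r G c, c))"

definition rename_disk :: "('v \<Rightarrow> 'v) \<Rightarrow> ('v, 'p, 's, 'd) graph \<times> 'v \<Rightarrow> ('v, 'p, 's, 'd) graph \<times> 'v" where
  "rename_disk R D = (rename R (fst D), R (snd D))"

definition local_rule :: "'s set \<Rightarrow> 'd set \<Rightarrow> 'p set \<Rightarrow> nat \<Rightarrow>
    (('v, 'p, 's, 'd) graph \<times> 'v \<Rightarrow> ('v, 'p, 's, 'd) graph) \<Rightarrow> bool" where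
  "local_rule Sig Del Pi r f \<longleftrightarrow>
     \<comment> \<open>outputs are graphs\<close>
     (\<forall>D. is_disk Sig Del Pi r D \<longrightarrow> is_graph Sig Del Pi (f D)) \<and>
     \<comment> \<open>renaming covariance\<close>
     (\<forall>R. bij R \<longrightarrow> (\<exists>R'. bij R' \<and>
        (\<forall>D. is_disk Sig Del Pi r D \<longrightarrow> f (rename_disk R D) = rename R' (f D)))) \<and>
     \<comment> \<open>disjointness preservation\<close>
     (\<forall>D D'. is_disk Sig Del Pi r D \<longrightarrow> is_disk Sig Del Pi r D' \<longrightarrow>
        verts (fst D) \<inter> verts (fst D') = {} \<longrightarrow> verts (f D) \<inter> verts (f D') = {}) \<and>
     \<comment> \<open>bounded output size\<close>
     (\<exists>b::nat. \<forall>D. is_disk Sig Del Pi r D \<longrightarrow>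
        finite (verts (f D)) \<and> card (verts (f D)) \<le> b) \<and>
     \<comment> \<open>consistency\<close>
     (\<forall>G u v. is_graph Sig Del Pi G \<longrightarrow> u \<in> verts G \<longrightarrow> v \<in> verts G \<longrightarrow>
        consistent Sig Del Pi (f (disk r G u, u)) (f (disk r G v, v)))"

definition mono_local_rule :: "'s set \<Rightarrow> 'd set \<Rightarrow> 'p set \<Rightarrow> nat \<Rightarrow>
    (('v, 'p, 's, 'd) graph \<times> 'v \<Rightarrow> ('v, 'p, 's, 'd) graph) \<Rightarrow> bool" where
  "mono_local_rule Sig Del Pi r f \<longleftrightarrow>
     (\<forall>D D'. is_disk Sig Del Pi r D \<longrightarrow> is_disk Sig Del Pi r D' \<longrightarrow>
        snd D = snd D' \<longrightarrow> subgraph (fst D) (fst D') \<longrightarrow> subgraph (f D) (f D'))"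

definition cgd_of :: "nat \<Rightarrow> (('v, 'p, 's, 'd) graph \<times> 'v \<Rightarrow> ('v, 'p, 's, 'd) graph) \<Rightarrow>
    ('v, 'p, 's, 'd) graph \<Rightarrow> ('v, 'p, 's, 'd) graph" where
  "cgd_of r f G = gunion ((\<lambda>v. f (disk r G v, v)) ` verts G)"

definition mono_graph_fun :: "'s set \<Rightarrow> 'd set \<Rightarrow> 'p set \<Rightarrow>
    (('v, 'p, 's, 'd) graph \<Rightarrow> ('v, 'p, 's, 'd) graph) \<Rightarrow> bool" where
  "mono_graph_fun Sig Del Pi F \<longleftrightarrow>
     (\<forall>G H. is_graph Sig Del Pi G \<longrightarrow> is_graph Sig Del Pi H \<longrightarrow>
        subgraph G H \<longrightarrow> subgraph (F G) (F H))"

text \<open>A morphism is represented as (source, target, underlying renaming).\<close>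
type_synonym ('v, 'p, 's, 'd) morph =
  "('v, 'p, 's, 'd) graph \<times> ('v, 'p, 's, 'd) graph \<times> ('v \<Rightarrow> 'v)"

definition msrc :: "('v, 'p, 's, 'd) morph \<Rightarrow> ('v, 'p, 's, 'd) graph" where
  "msrc m = fst m"
definition mtgt :: "('v, 'p, 's, 'd) morph \<Rightarrow> ('v, 'p, 's, 'd) graph" where
  "mtgt m = fst (snd m)"
definition mren :: "('v, 'p, 's, 'd) morph \<Rightarrow> ('v \<Rightarrow> 'v)" where
  "mren m = snd (snd m)"

definition is_morph :: "'s set \<Rightarrow> 'd set \<Rightarrow> 'p set \<Rightarrow> ('v, 'p, 's, 'd) morph \<Rightarrow> bool" where
  "is_morph Sig Del Pi m \<longleftrightarrow>
     is_graph Sig Del Pi (msrc m) \<and> is_graph Sig Del Pi (mtgt m) \<and> bij (mren m) \<and>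
     subgraph (rename (mren m) (msrc m)) (mtgt m)"

text \<open>An endofunctor of G, given by its object map Fo and its morphism map Fm.\<close>
definition is_functor :: "'s set \<Rightarrow> 'd set \<Rightarrow> 'p set \<Rightarrow>
    (('v, 'p, 's, 'd) graph \<Rightarrow> ('v, 'p, 's, 'd) graph) \<Rightarrow>
    (('v, 'p, 's, 'd) morph \<Rightarrow> ('v, 'p, 's, 'd) morph) \<Rightarrow> bool" where
  "is_functor Sig Del Pi Fo Fm \<longleftrightarrow>
     (\<forall>G. is_graph Sig Del Pi G \<longrightarrow> is_graph Sig Del Pi (Fo G)) \<and>
     (\<forall>m. is_morph Sig Del Pi m \<longrightarrow>
        is_morph Sig Del Pi (Fm m) \<and> msrc (Fm m) = Fo (msrc m) \<and> mtgt (Fm m) = Fo (mtgt m)) \<and>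
     (\<forall>G. is_graph Sig Del Pi G \<longrightarrow> Fm (G, G, id) = (Fo G, Fo G, id)) \<and>
     (\<forall>G H K R S. is_morph Sig Del Pi (G, H, R) \<longrightarrow> is_morph Sig Del Pi (H, K, S) \<longrightarrow>
        Fm (G, K, S \<circ> R) = (Fo G, Fo K, mren (Fm (H, K, S)) \<circ> mren (Fm (G, H, R))))"

text \<open>U \<circ> F = Ftilde \<circ> U, where U sends an inclusion G \<subseteq> H to (G, H, id).\<close>
definition commutes_with_U :: "'s set \<Rightarrow> 'd set \<Rightarrow> 'p set \<Rightarrow>
    (('v, 'p, 's, 'd) graph \<Rightarrow> ('v, 'p, 's, 'd) graph) \<Rightarrow>
    (('v, 'p, 's, 'd) graph \<Rightarrow> ('v, 'p, 's, 'd) graph) \<Rightarrow>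
    (('v, 'p, 's, 'd) morph \<Rightarrow> ('v, 'p, 's, 'd) morph) \<Rightarrow> bool" where
  "commutes_with_U Sig Del Pi F Fo Fm \<longleftrightarrow>
     (\<forall>G. is_graph Sig Del Pi G \<longrightarrow> Fo G = F G) \<and>
     (\<forall>G H. is_graph Sig Del Pi G \<longrightarrow> is_graph Sig Del Pi H \<longrightarrow> subgraph G H \<longrightarrow>
        Fm (G, H, id) = (F G, F H, id))"

end

theory Submission
  imports Defs
begin

text \<open>The morphism \<open>\<emptyset> \<rightarrow> H\<close> with renaming \<open>|m|\<close> factors both as \<open>m\<close> after the inclusion
  \<open>\<emptyset> \<subseteq> G\<close> and as the inclusion \<open>\<emptyset> \<subseteq> H\<close> after \<open>\<emptyset>\<^bsub>|m|\<^esub>\<close>. Since \<open>U \<circ> F = F\<^sup>~ \<circ> U\<close>, the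
  functor sends inclusions to morphisms with identity renaming, so functoriality
  applied to the two factorisations gives \<open>|F\<^sup>~(m)| = |F\<^sup>~(\<emptyset>\<^bsub>|m|\<^esub>)|\<close>.\<close>

lemma is_graph_empty_graph: "is_graph Sig Del Pi empty_graph"
  by (simp add: is_graph_def empty_graph_def)

lemma rename_empty_graph: "rename R empty_graph = empty_graph"
  by (simp add: rename_def empty_graph_def comp_def)

lemma subgraph_empty_graph: "subgraph empty_graph G"
  by (simp add: subgraph_def empty_graph_def)

lemma is_morph_empty_graph_inclusion:
  "is_graph Sig Del Pi G \<Longrightarrow> is_morph Sig Del Pi (empty_graph, G, id)"
  by (simp add: is_morph_def msrc_def mtgt_def mren_def is_graph_empty_graph
      rename_empty_graph subgraph_empty_graph)

lemma is_morph_empty_graph_endo: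
  "bij R \<Longrightarrow> is_morph Sig Del Pi (empty_graph, empty_graph, R)"
  by (simp add: is_morph_def msrc_def mtgt_def mren_def is_graph_empty_graph
      rename_empty_graph subgraph_empty_graph)

lemma mren_functor_comp:
  assumes "is_functor Sig Del Pi Fo Fm"
    and "is_morph Sig Del Pi (G, H, R)" and "is_morph Sig Del Pi (H, K, S)"
  shows "mren (Fm (G, K, S \<circ> R)) = mren (Fm (H, K, S)) \<circ> mren (Fm (G, H, R))"
  using assms by (simp add: is_functor_def mren_def)

lemma mren_functor_inclusion:
  assumes "commutes_with_U Sig Del Pi F Fo Fm"
    and "is_graph Sig Del Pi G" and "is_graph Sig Del Pi H" and "subgraph G H"
  shows "mren (Fm (G, H, id)) = id"
  using assms by (simp add: commutes_with_U_def mren_def)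

lemma mren_functor_eq_mren_empty_graph_endo:
  assumes Fm_functor: "is_functor Sig Del Pi Fo Fm"
    and commutes: "commutes_with_U Sig Del Pi F Fo Fm"
    and m: "is_morph Sig Del Pi (G, H, R)"
  shows "mren (Fm (G, H, R)) = mren (Fm (empty_graph, empty_graph, R))"
proof -
  have G: "is_graph Sig Del Pi G" and H: "is_graph Sig Del Pi H" and "bij R"
    using m by (auto simp: is_morph_def msrc_def mtgt_def mren_def)
  have incl_G: "is_morph Sig Del Pi (empty_graph, G, id)"
    and incl_H: "is_morph Sig Del Pi (empty_graph, H, id)"
    and endo: "is_morph Sig Del Pi (empty_graph, empty_graph, R)"
    using G H \<open>bij R\<close> by (simp_all add: is_morph_empty_graph_inclusion is_morph_empty_graph_endo)
  have "mren (Fm (G, H, R)) = mren (Fm (G, H, R)) \<circ> mren (Fm (empty_graph, G, id))"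
    using mren_functor_inclusion[OF commutes is_graph_empty_graph G subgraph_empty_graph]
    by simp
  also have "\<dots> = mren (Fm (empty_graph, H, R \<circ> id))"
    using mren_functor_comp[OF Fm_functor incl_G m] by simp
  also have "\<dots> = mren (Fm (empty_graph, H, id \<circ> R))"
    by simp
  also have "\<dots> = mren (Fm (empty_graph, H, id)) \<circ> mren (Fm (empty_graph, empty_graph, R))"
    using mren_functor_comp[OF Fm_functor endo incl_H] .
  also have "\<dots> = mren (Fm (empty_graph, empty_graph, R))"
    using mren_functor_inclusion[OF commutes is_graph_empty_graph H subgraph_empty_graph]
    by simp
  finally show ?thesis .
qed

theorem proposition4p9:
  fixes Sig :: "'s set" and Del :: "'d set" and Pi :: "'p set"
    and F :: "('v, 'p, 's, 'd) graph \<Rightarrow> ('v, 'p, 's, 'd) graph"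
    and Fo :: "('v, 'p, 's, 'd) graph \<Rightarrow> ('v, 'p, 's, 'd) graph"
    and Fm :: "('v, 'p, 's, 'd) morph \<Rightarrow> ('v, 'p, 's, 'd) morph"
  assumes uncountable_V: "uncountable (UNIV :: 'v set)"
    and finite_Pi: "finite Pi"
    and F_mono: "mono_graph_fun Sig Del Pi F"
    and F_cgd: "\<exists>r f. local_rule Sig Del Pi r f \<and> mono_local_rule Sig Del Pi r f \<and>
                  (\<forall>G. is_graph Sig Del Pi G \<longrightarrow> F G = cgd_of r f G)"
    and Ft_functor: "is_functor Sig Del Pi Fo Fm"
    and Ft_U: "commutes_with_U Sig Del Pi F Fo Fm"
  shows "\<forall>G H R. is_morph Sig Del Pi (G, H, R) \<longrightarrow>
           mren (Fm (G, H, R)) = mren (Fm (empty_graph, empty_graph, R))"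
  using mren_functor_eq_mren_empty_graph_endo[OF Ft_functor Ft_U] by blast

end
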